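(* Let $G(A,B)$ be a matching-covered bipartite graph. Then $G(A,B)$ has an equivalent class if and only if $G(A,B)$ has a 2-edge-cut which separates $G(A,B)$ into two balanced components.
   Context: A matching-covered graph is a connected graph with a perfect matching in which every edge lies in some perfect matching. Two edges of a matching-covered graph $G$ are equivalent if every perfect matching of $G$ either contains both of them or contains neither. An equivalent class of $G$ is a set $K\subseteq E(G)$ with at least two edges such that any two edges of $K$ are equivalent. A 2-edge-cut separating $G$ into two components is a set $S$ of two edges such that $G\setminus S$ has exactly two components and $S$ consists of the edges between them. A bipartite component with bipartition $(A',B')$ is balanced if $|A'|=|B'|$. *)

theory Defs
  imports Main
begin

definition simple_graph :: "'a set \<Rightarrow> 'a set set \<Rightarrow> bool" where
  "simple_graph V E \<longleftrightarrow> finite V \<and>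
     (\<forall>e\<in>E. \<exists>u v. e = {u, v} \<and> u \<noteq> v \<and> u \<in> V \<and> v \<in> V)"

definition adj :: "'a set set \<Rightarrow> 'a \<Rightarrow> 'a \<Rightarrow> bool" where
  "adj E u v \<longleftrightarrow> {u, v} \<in> E"

definition connected_graph :: "'a set \<Rightarrow> 'a set set \<Rightarrow> bool" where
  "connected_graph V E \<longleftrightarrow> V \<noteq> {} \<and> (\<forall>u\<in>V. \<forall>v\<in>V. (adj E)\<^sup>*\<^sup>* u v)"

definition is_component :: "'a set \<Rightarrow> 'a set set \<Rightarrow> 'a set \<Rightarrow> bool" where
  "is_component V F X \<longleftrightarrow> X \<subseteq> V \<and> connected_graph X {e\<in>F. e \<subseteq> X} \<and>
     (\<forall>e\<in>F. e \<inter> X \<noteq> {} \<longrightarrow> e \<subseteq> X)"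

definition perfect_matching :: "'a set \<Rightarrow> 'a set set \<Rightarrow> 'a set set \<Rightarrow> bool" where
  "perfect_matching V E M \<longleftrightarrow> M \<subseteq> E \<and> (\<forall>v\<in>V. \<exists>!e. e \<in> M \<and> v \<in> e)"

definition matching_covered :: "'a set \<Rightarrow> 'a set set \<Rightarrow> bool" where
  "matching_covered V E \<longleftrightarrow> connected_graph V E \<and> (\<exists>M. perfect_matching V E M) \<and>
     (\<forall>e\<in>E. \<exists>M. perfect_matching V E M \<and> e \<in> M)"

definition bipartite_with :: "'a set \<Rightarrow> 'a set set \<Rightarrow> 'a set \<Rightarrow> 'a set \<Rightarrow> bool" where
  "bipartite_with V E A B \<longleftrightarrow> A \<inter> B = {} \<and> A \<union> B = V \<and>
     (\<forall>e\<in>E. card (e \<inter> A) = 1 \<and> card (e \<inter> B) = 1)"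

definition equivalent_edges :: "'a set \<Rightarrow> 'a set set \<Rightarrow> 'a set \<Rightarrow> 'a set \<Rightarrow> bool" where
  "equivalent_edges V E e f \<longleftrightarrow> (\<forall>M. perfect_matching V E M \<longrightarrow> (e \<in> M \<longleftrightarrow> f \<in> M))"

definition equivalent_class :: "'a set \<Rightarrow> 'a set set \<Rightarrow> 'a set set \<Rightarrow> bool" where
  "equivalent_class V E K \<longleftrightarrow> K \<subseteq> E \<and> card K \<ge> 2 \<and>
     (\<forall>e\<in>K. \<forall>f\<in>K. equivalent_edges V E e f)"

definition two_edge_cut_sep :: "'a set \<Rightarrow> 'a set set \<Rightarrow> 'a set set \<Rightarrow> 'a set \<Rightarrow> 'a set \<Rightarrow> bool" where
  "two_edge_cut_sep V E S X Y \<longleftrightarrow> S \<subseteq> E \<and> card S = 2 \<and> X \<noteq> Y \<and>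
     {Z. is_component V (E - S) Z} = {X, Y} \<and>
     S = {e\<in>E. e \<inter> X \<noteq> {} \<and> e \<inter> Y \<noteq> {}}"

definition balanced :: "'a set \<Rightarrow> 'a set \<Rightarrow> 'a set \<Rightarrow> bool" where
  "balanced A B X \<longleftrightarrow> card (X \<inter> A) = card (X \<inter> B)"

end

theory Submission
  imports Defs
begin

text \<open>If M is a perfect matching and Q the set of vertices of W matched outside W, then
  |W \<inter> A| - |W \<inter> B| = |Q \<inter> A| - |Q \<inter> B|. So a balanced side of a 2-edge-cut is
  crossed by both cut edges of M or by neither, and a single crossing edge would be a bridge lying
  in every perfect matching, which is impossible unless the graph is that edge.

  Conversely, let e = a1 b1 and f = a2 b2 be equivalent edges of a perfect matching M. Let R be
  the set of vertices reachable from b1 by M-alternating paths avoiding a1 and a2, and N(R) its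
  neighbourhood. Swapping along such paths, every b in R is left uncovered, together with a1, by a
  matching containing f; adding the edge b a1 would then give a perfect matching containing f but
  not e, so b1 is the only neighbour of a1 in R. Now M maps R onto N(R) - {a2}, and since every
  edge lies in a perfect matching, Hall-type tightness shows that a2 is in N(R) and that e and f
  are the only edges leaving R \<union> (N(R) - {a1}). This set is balanced, and as there are no
  bridges both it and its complement are connected.\<close>

definition crossing :: "'a set set \<Rightarrow> 'a set \<Rightarrow> 'a set set" where
  "crossing E W = {h\<in>E. h \<inter> W \<noteq> {} \<and> h - W \<noteq> {}}"

definition nbrs :: "'a set set \<Rightarrow> 'a set \<Rightarrow> 'a set" where
  "nbrs E X = {a. \<exists>b\<in>X. {b, a} \<in> E}"

definition exact_matching :: "'a set set \<Rightarrow> 'a set \<Rightarrow> 'a set set \<Rightarrow> bool" where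
  "exact_matching E W N \<longleftrightarrow> N \<subseteq> E \<and> \<Union>N = W \<and> pairwise disjnt N"

definition mate :: "'a set set \<Rightarrow> 'a \<Rightarrow> 'a" where
  "mate M v = (THE u. {v, u} \<in> M)"

lemma rtranclp_adj_sym: "(adj F)\<^sup>*\<^sup>* u v \<Longrightarrow> (adj F)\<^sup>*\<^sup>* v u"
proof (induction rule: rtranclp_induct)
  case (step y z)
  then have "adj F z y" by (simp add: adj_def insert_commute)
  then show ?case using step.IH by (rule converse_rtranclp_into_rtranclp)
qed simp

lemma rtranclp_adj_closed:
  assumes closed: "\<And>h. h \<in> F \<Longrightarrow> h \<inter> W \<noteq> {} \<Longrightarrow> h \<subseteq> W"
    and "(adj F)\<^sup>*\<^sup>* x v" and "x \<in> W"
  shows "v \<in> W \<and> (adj {h\<in>F. h \<subseteq> W})\<^sup>*\<^sup>* x v"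
  using assms(2,3)
proof (induction rule: rtranclp_induct)
  case (step y z)
  then have "{y, z} \<in> F" "{y, z} \<subseteq> W" using closed by (auto simp: adj_def)
  then show ?case using step by (auto simp: adj_def intro: rtranclp.rtrancl_into_rtrancl)
qed simp

lemma is_component_closed:
  "is_component V F X \<Longrightarrow> h \<in> F \<Longrightarrow> h \<inter> X \<noteq> {} \<Longrightarrow> h \<subseteq> X"
  by (simp add: is_component_def)

lemma is_component_eq:
  assumes X: "is_component V F X" and Y: "is_component V F Y" and "x \<in> X" "x \<in> Y"
  shows "X = Y"
proof -
  have "X \<subseteq> Y" if X: "is_component V F X" and Y: "is_component V F Y" and "x \<in> X" "x \<in> Y"
    for X Y
  proof
    fix v assume "v \<in> X"
    then have "(adj {e\<in>F. e \<subseteq> X})\<^sup>*\<^sup>* x v"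
      using X \<open>x \<in> X\<close> by (auto simp: is_component_def connected_graph_def)
    then have "(adj F)\<^sup>*\<^sup>* x v" by (rule mono_rtranclp[rule_format, rotated]) (simp add: adj_def)
    then show "v \<in> Y" using rtranclp_adj_closed[OF is_component_closed[OF Y]] \<open>x \<in> Y\<close> by blast
  qed
  then show ?thesis using assms by blast
qed

lemma edge_inside_if_not_crossing:
  assumes "crossing E Z \<subseteq> S" "h \<in> E - S" "h \<inter> Z \<noteq> {}"
  shows "h \<subseteq> Z"
  using assms by (auto simp: crossing_def)

lemma exact_matching_insert:
  assumes "exact_matching E W N" "e \<in> E" "e \<inter> W = {}"
  shows "exact_matching E (W \<union> e) (insert e N)"
  using assms by (auto simp: exact_matching_def pairwise_insert disjnt_def)

lemma exact_matching_remove: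
  assumes "exact_matching E W N" "g \<in> N"
  shows "exact_matching E (W - g) (N - {g})"
proof -
  have "\<Union>(N - {g}) = \<Union>N - g"
    using assms by (auto simp: exact_matching_def pairwise_def disjnt_def)
  then show ?thesis using assms by (auto simp: exact_matching_def intro: pairwise_subset)
qed

locale sgraph =
  fixes V :: "'a set" and E :: "'a set set"
  assumes simple: "simple_graph V E"
begin

lemma finite_vertices: "finite V"
  using simple by (simp add: simple_graph_def)

lemma edgeE:
  assumes "h \<in> E"
  obtains u v where "h = {u, v}" "u \<noteq> v" "u \<in> V" "v \<in> V"
  using assms simple by (auto simp: simple_graph_def)

lemma edge_subset: "h \<in> E \<Longrightarrow> h \<subseteq> V"
  by (auto elim: edgeE)

lemma crossingE:
  assumes "h \<in> crossing E W"
  obtains u w where "h = {u, w}" "u \<in> W" "w \<notin> W" "h \<in> E"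
proof -
  have "h \<in> E" "h \<inter> W \<noteq> {}" "h - W \<noteq> {}" using assms by (auto simp: crossing_def)
  moreover obtain u v where "h = {u, v}" using edgeE[OF \<open>h \<in> E\<close>] by metis
  ultimately show ?thesis using that[of u v] that[of v u] by (cases "u \<in> W") (auto simp: insert_commute)
qed

lemma crossing_Diff: "crossing E (V - Z) = crossing E Z"
  using edge_subset by (auto simp: crossing_def)

lemma crossing_empty_eq:
  assumes "connected_graph V E" "W \<subseteq> V" "W \<noteq> {}" "crossing E W = {}"
  shows "W = V"
proof -
  obtain u where "u \<in> W" using assms(3) by blast
  have "v \<in> W" if "v \<in> V" for v
  proof -
    have "(adj E)\<^sup>*\<^sup>* u v" using assms(1,2) \<open>u \<in> W\<close> that by (auto simp: connected_graph_def)
    moreover have "h \<subseteq> W" if "h \<in> E" "h \<inter> W \<noteq> {}" for h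
      using that assms(4) by (auto simp: crossing_def)
    ultimately show ?thesis using rtranclp_adj_closed[of E W u v] \<open>u \<in> W\<close> by blast
  qed
  then show ?thesis using assms(2) by blast
qed

lemma perfect_matching_iff: "perfect_matching V E M \<longleftrightarrow> exact_matching E V M"
proof
  assume pm: "perfect_matching V E M"
  then have "M \<subseteq> E" by (simp add: perfect_matching_def)
  then have "\<Union>M \<subseteq> V" using edge_subset by blast
  moreover have "V \<subseteq> \<Union>M" using pm by (auto simp: perfect_matching_def)
  moreover have "pairwise disjnt M"
    unfolding pairwise_def disjnt_def
  proof (intro ballI impI)
    fix g h assume gh: "g \<in> M" "h \<in> M" "g \<noteq> h"
    show "g \<inter> h = {}"
    proof (rule ccontr)
      assume "g \<inter> h \<noteq> {}"
      then obtain v where "v \<in> g" "v \<in> h" by blast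
      then have "v \<in> V" using gh \<open>\<Union>M \<subseteq> V\<close> by blast
      then show False using pm gh \<open>v \<in> g\<close> \<open>v \<in> h\<close> unfolding perfect_matching_def by blast
    qed
  qed
  ultimately show "exact_matching E V M" using \<open>M \<subseteq> E\<close> by (simp add: exact_matching_def)
next
  assume "exact_matching E V M"
  then show "perfect_matching V E M"
    by (auto simp: exact_matching_def perfect_matching_def pairwise_def disjnt_def)
qed

lemma perfect_matching_disjoint:
  "perfect_matching V E M \<Longrightarrow> g \<in> M \<Longrightarrow> h \<in> M \<Longrightarrow> g \<inter> h \<noteq> {} \<Longrightarrow> g = h"
  unfolding perfect_matching_iff exact_matching_def pairwise_def disjnt_def by blast

lemma perfect_matching_subset: "perfect_matching V E M \<Longrightarrow> M \<subseteq> E"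
  by (simp add: perfect_matching_def)

lemma mate_eq:
  assumes pm: "perfect_matching V E M" and vu: "{v, u} \<in> M"
  shows "mate M v = u"
  unfolding mate_def
proof (rule the_equality)
  show "{v, u} \<in> M" by (fact vu)
next
  fix w assume vw: "{v, w} \<in> M"
  have "u \<noteq> v" using vu perfect_matching_subset[OF pm] by (auto elim!: edgeE simp: doubleton_eq_iff)
  moreover have "{v, w} = {v, u}" using perfect_matching_disjoint[OF pm vw vu] by blast
  ultimately show "w = u" by (auto simp: doubleton_eq_iff)
qed

lemma mate_in_matching:
  assumes pm: "perfect_matching V E M" and "v \<in> V"
  shows "{v, mate M v} \<in> M"
proof -
  obtain g where g: "g \<in> M" "v \<in> g" using pm \<open>v \<in> V\<close> by (auto simp: perfect_matching_def)
  then obtain u where "g = {v, u}" using perfect_matching_subset[OF pm] by (auto elim!: edgeE)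
  then show ?thesis using g mate_eq[OF pm] by simp
qed

lemma mate_edge: "perfect_matching V E M \<Longrightarrow> v \<in> V \<Longrightarrow> {v, mate M v} \<in> E"
  using mate_in_matching perfect_matching_subset by blast

lemma mate_mate: "perfect_matching V E M \<Longrightarrow> v \<in> V \<Longrightarrow> mate M (mate M v) = v"
  using mate_in_matching mate_eq by (metis insert_commute)

lemma inj_on_mate: "perfect_matching V E M \<Longrightarrow> inj_on (mate M) V"
  by (metis inj_onI mate_mate)

lemma mate_image_subset_nbrs:
  "perfect_matching V E M \<Longrightarrow> X \<subseteq> V \<Longrightarrow> mate M ` X \<subseteq> nbrs E X"
  using mate_edge by (auto simp: nbrs_def)

lemma matched_into_tight:
  assumes pm: "perfect_matching V E M" and "X \<subseteq> V" "mate M ` X \<subseteq> Y" "finite Y"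
    "card Y \<le> card X" and ab: "{a, b} \<in> M" "a \<in> Y"
  shows "b \<in> X"
proof -
  have "inj_on (mate M) X" using inj_on_mate[OF pm] \<open>X \<subseteq> V\<close> by (rule inj_on_subset)
  then have "card (mate M ` X) = card Y"
    using card_mono[OF \<open>finite Y\<close> \<open>mate M ` X \<subseteq> Y\<close>] \<open>card Y \<le> card X\<close> by (simp add: card_image)
  then have "mate M ` X = Y" using card_subset_eq[OF \<open>finite Y\<close> \<open>mate M ` X \<subseteq> Y\<close>] by simp
  then obtain x where "x \<in> X" "a = mate M x" using ab by blast
  then show ?thesis
    using mate_mate[OF pm] mate_eq[OF pm ab(1)] \<open>X \<subseteq> V\<close> by auto
qed

end

locale mc_bipartite = sgraph +
  fixes A B :: "'a set"
  assumes bipartite: "bipartite_with V E A B" and covered: "matching_covered V E"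
begin

lemma A_Int_B: "A \<inter> B = {}" and A_Un_B: "A \<union> B = V"
  using bipartite by (auto simp: bipartite_with_def)

lemma finite_A: "finite A" and finite_B: "finite B"
  using finite_vertices A_Un_B by (metis finite_Un)+

lemma connected: "connected_graph V E"
  using covered by (simp add: matching_covered_def)

lemma perfect_matching_through:
  assumes "h \<in> E"
  obtains M where "perfect_matching V E M" "h \<in> M"
  using covered assms by (auto simp: matching_covered_def)

lemma edge_AB:
  assumes "h \<in> E"
  obtains a b where "h = {a, b}" "a \<in> A" "b \<in> B"
proof -
  obtain u v where h: "h = {u, v}" "u \<noteq> v" "u \<in> V" "v \<in> V" using assms by (rule edgeE)
  have "card (h \<inter> A) = 1" "card (h \<inter> B) = 1"
    using bipartite assms by (auto simp: bipartite_with_def)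
  then have "u \<in> A \<and> v \<in> B \<or> v \<in> A \<and> u \<in> B"
    using h A_Un_B by (auto simp: card_insert_if split: if_splits)
  then show ?thesis using that h by (auto simp: insert_commute)
qed

lemma edge_B_A: "{b, a} \<in> E \<Longrightarrow> b \<in> B \<Longrightarrow> a \<in> A"
  using A_Int_B by (auto elim!: edge_AB simp: doubleton_eq_iff)

lemma edge_A_B: "{a, b} \<in> E \<Longrightarrow> a \<in> A \<Longrightarrow> b \<in> B"
  using A_Int_B by (auto elim!: edge_AB simp: doubleton_eq_iff)

lemma mate_A: "perfect_matching V E M \<Longrightarrow> a \<in> A \<Longrightarrow> mate M a \<in> B"
  using edge_A_B mate_edge A_Un_B by blast

lemma mate_B: "perfect_matching V E M \<Longrightarrow> b \<in> B \<Longrightarrow> mate M b \<in> A"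
  using edge_B_A mate_edge A_Un_B by blast

lemma card_A_eq_card_B: "card A = card B"
proof -
  obtain M where pm: "perfect_matching V E M" using covered by (auto simp: matching_covered_def)
  have "inj_on (mate M) A" "inj_on (mate M) B"
    using inj_on_mate[OF pm] A_Un_B by (auto intro: inj_on_subset)
  moreover have "mate M ` A \<subseteq> B" "mate M ` B \<subseteq> A" using mate_A[OF pm] mate_B[OF pm] by auto
  ultimately show ?thesis using card_inj_on_le finite_A finite_B by (metis le_antisym)
qed

lemma balanced_Diff:
  assumes "X \<subseteq> V" "balanced A B X"
  shows "balanced A B (V - X)"
proof -
  have "(V - X) \<inter> A = A - X \<inter> A" "(V - X) \<inter> B = B - X \<inter> B" using A_Un_B by blast+
  then show ?thesis using assms(2) card_A_eq_card_B finite_A finite_B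
    by (simp add: balanced_def card_Diff_subset finite_subset)
qed

lemma card_matched_out:
  assumes pm: "perfect_matching V E M" and W: "W \<subseteq> V"
  defines "Q \<equiv> {x\<in>W. mate M x \<notin> W}"
  shows "card (W \<inter> A) + card (Q \<inter> B) = card (W \<inter> B) + card (Q \<inter> A)"
proof -
  have fin: "finite W" using W finite_vertices finite_subset by blast
  have "mate M ` (W \<inter> A - Q) = W \<inter> B - Q"
  proof
    show "mate M ` (W \<inter> A - Q) \<subseteq> W \<inter> B - Q"
      using W mate_A[OF pm] mate_mate[OF pm] by (auto simp: Q_def)
    show "W \<inter> B - Q \<subseteq> mate M ` (W \<inter> A - Q)"
    proof
      fix y assume y: "y \<in> W \<inter> B - Q"
      then have "y = mate M (mate M y)" "mate M y \<in> W \<inter> A - Q"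
        using W mate_B[OF pm] mate_mate[OF pm] by (auto simp: Q_def)
      then show "y \<in> mate M ` (W \<inter> A - Q)" by blast
    qed
  qed
  moreover have "inj_on (mate M) (W \<inter> A - Q)" using inj_on_mate[OF pm] W by (auto intro: inj_on_subset)
  ultimately have "card (W \<inter> A - Q) = card (W \<inter> B - Q)" using card_image by metis
  moreover have "card (W \<inter> C) = card (W \<inter> C - Q) + card (Q \<inter> C)" for C
  proof -
    have "W \<inter> C = (W \<inter> C - Q) \<union> (Q \<inter> C)" "(W \<inter> C - Q) \<inter> (Q \<inter> C) = {}" by (auto simp: Q_def)
    moreover have "finite (W \<inter> C - Q)" "finite (Q \<inter> C)" using fin by (auto simp: Q_def)
    ultimately show ?thesis by (metis card_Un_disjoint)
  qed
  ultimately show ?thesis by (metis add.assoc add.commute)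
qed

lemma matched_out_subset:
  assumes pm: "perfect_matching V E M" and "W \<subseteq> V" "x \<in> W" "mate M x \<notin> W"
  shows "x \<in> \<Union>(crossing E W \<inter> M)"
proof -
  have "{x, mate M x} \<in> M" "{x, mate M x} \<in> E"
    using assms mate_in_matching mate_edge by blast+
  then show ?thesis using assms(3,4) by (auto simp: crossing_def)
qed

lemma balanced_if_no_matching_edge_crosses:
  assumes pm: "perfect_matching V E M" and W: "W \<subseteq> V" and "crossing E W \<inter> M = {}"
  shows "balanced A B W"
proof -
  have "{x\<in>W. mate M x \<notin> W} = {}" using matched_out_subset[OF pm W] assms(3) by blast
  with card_matched_out[OF pm W] show ?thesis by (simp only: balanced_def) simp
qed

lemma unbalanced_if_one_matching_edge_crosses:
  assumes pm: "perfect_matching V E M" and W: "W \<subseteq> V" and g: "crossing E W \<inter> M = {g}"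
  shows "\<not> balanced A B W"
proof -
  have "g \<in> crossing E W" "g \<in> M" using g by blast+
  then obtain u w where uw: "g = {u, w}" "u \<in> W" "w \<notin> W" by (blast elim: crossingE)
  have "mate M u = w" using mate_eq[OF pm] uw \<open>g \<in> M\<close> by blast
  have "{x\<in>W. mate M x \<notin> W} = {u}"
  proof
    show "{x\<in>W. mate M x \<notin> W} \<subseteq> {u}"
      using matched_out_subset[OF pm W] g uw by fastforce
    show "{u} \<subseteq> {x\<in>W. mate M x \<notin> W}" using uw \<open>mate M u = w\<close> by simp
  qed
  then have "card (W \<inter> A) + card ({u} \<inter> B) = card (W \<inter> B) + card ({u} \<inter> A)"
    using card_matched_out[OF pm W] by simp
  moreover have "u \<in> A \<and> u \<notin> B \<or> u \<in> B \<and> u \<notin> A" using uw W A_Un_B A_Int_B by blast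
  ultimately show ?thesis unfolding balanced_def by (elim disjE conjE) simp_all
qed

text \<open>No edge is a bridge, unless the graph is that single edge.\<close>
lemma crossing_singleton:
  assumes W: "W \<subseteq> V" and g: "crossing E W = {g}"
  shows "g = V"
proof -
  have "g \<in> crossing E W" using g by blast
  then have gE: "g \<in> E" by (simp add: crossing_def)
  obtain M0 where M0: "perfect_matching V E M0" "g \<in> M0" using gE by (rule perfect_matching_through)
  then have "crossing E W \<inter> M0 = {g}" using g M0(2) by simp
  then have unbalanced: "\<not> balanced A B W"
    by (rule unbalanced_if_one_matching_edge_crosses[OF M0(1) W])
  have all: "g \<in> M" if pm: "perfect_matching V E M" for M
  proof (rule ccontr)
    assume "g \<notin> M"
    then have "crossing E W \<inter> M = {}" using g by simp
    then show False using balanced_if_no_matching_edge_crosses[OF pm W] unbalanced by blast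
  qed
  have "crossing E g = {}"
  proof (rule ccontr)
    assume "crossing E g \<noteq> {}"
    then obtain h where "h \<in> crossing E g" by blast
    then have h: "h \<in> E" "h \<inter> g \<noteq> {}" "h \<noteq> g" by (auto simp: crossing_def)
    obtain M where M: "perfect_matching V E M" "h \<in> M" using h(1) by (rule perfect_matching_through)
    then show False using perfect_matching_disjoint[OF M all[OF M(1)] h(2)] h(3) by blast
  qed
  moreover have "g \<subseteq> V" "g \<noteq> {}" using gE by (auto elim: edgeE)
  ultimately show ?thesis using crossing_empty_eq[OF connected] by blast
qed

lemma two_edge_cut_sep_components:
  assumes "two_edge_cut_sep V E S X Y"
  shows "is_component V (E - S) X" "is_component V (E - S) Y"
proof -
  have "{Z. is_component V (E - S) Z} = {X, Y}" using assms unfolding two_edge_cut_sep_def by blast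
  then have "X \<in> {Z. is_component V (E - S) Z}" "Y \<in> {Z. is_component V (E - S) Z}" by simp_all
  then show "is_component V (E - S) X" "is_component V (E - S) Y" by simp_all
qed

lemma two_edge_cut_sep_crossing:
  assumes cut: "two_edge_cut_sep V E S X Y"
  shows "crossing E X = S"
proof -
  have X: "is_component V (E - S) X" and Y: "is_component V (E - S) Y"
    using two_edge_cut_sep_components[OF cut] .
  have "X \<noteq> Y" and S: "S = {e\<in>E. e \<inter> X \<noteq> {} \<and> e \<inter> Y \<noteq> {}}"
    using cut unfolding two_edge_cut_sep_def by blast+
  then have "X \<inter> Y = {}" using is_component_eq[OF X Y] by blast
  have closed: "\<And>h. h \<in> E - S \<Longrightarrow> h \<inter> X \<noteq> {} \<Longrightarrow> h \<subseteq> X"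
    using is_component_closed[OF X] by blast
  show ?thesis
  proof
    show "crossing E X \<subseteq> S" using closed by (auto simp: crossing_def)
    show "S \<subseteq> crossing E X" using S \<open>X \<inter> Y = {}\<close> by (auto simp: crossing_def)
  qed
qed

lemma equivalent_class_of_balanced_cut:
  assumes cut: "two_edge_cut_sep V E S X Y" and bal: "balanced A B X"
  shows "equivalent_class V E S"
proof -
  have "S \<subseteq> E" "card S = 2" using cut unfolding two_edge_cut_sep_def by blast+
  have X: "X \<subseteq> V" using two_edge_cut_sep_components(1)[OF cut] by (simp add: is_component_def)
  have "g \<in> M" if pm: "perfect_matching V E M" and "g \<in> S" "h \<in> S" "h \<in> M" for M g h
  proof (rule ccontr)
    assume "g \<notin> M"
    then have "g \<noteq> h" using \<open>h \<in> M\<close> by blast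
    moreover have "finite S" using \<open>card S = 2\<close> card.infinite by fastforce
    ultimately have "S = {g, h}"
      using \<open>card S = 2\<close> that(2,3) card_subset_eq[of S "{g, h}"] by simp
    then have "crossing E X \<inter> M = {h}"
      using two_edge_cut_sep_crossing[OF cut] \<open>g \<notin> M\<close> \<open>h \<in> M\<close> by simp
    then have "\<not> balanced A B X" by (rule unbalanced_if_one_matching_edge_crosses[OF pm X])
    with bal show False by contradiction
  qed
  then have "equivalent_edges V E g h" if "g \<in> S" "h \<in> S" for g h
    using that unfolding equivalent_edges_def by blast
  then show ?thesis using \<open>S \<subseteq> E\<close> \<open>card S = 2\<close> by (simp add: equivalent_class_def)
qed

lemma crossing_Int_Diff:
  assumes "h \<in> crossing E Z" "h \<in> crossing E C" "C \<subseteq> Z"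
  shows "h \<inter> (Z - C) = {}"
proof -
  obtain u w where "h = {u, w}" "u \<in> Z" "w \<notin> Z" using assms(1) by (rule crossingE)
  moreover have "h \<inter> C \<noteq> {}" using assms(2) by (simp add: crossing_def)
  ultimately show ?thesis using assms(3) by blast
qed

lemma reachable_closed:
  assumes "F \<subseteq> E" "h \<in> F" "h \<inter> {v. (adj F)\<^sup>*\<^sup>* x v} \<noteq> {}"
  shows "h \<subseteq> {v. (adj F)\<^sup>*\<^sup>* x v}"
proof -
  obtain u w where "h = {u, w}" using assms(1,2) by (blast elim: edgeE)
  then have "adj F u w" "adj F w u" using assms(2) by (simp_all add: adj_def insert_commute)
  then show ?thesis using assms(3) \<open>h = {u, w}\<close> by (auto intro: rtranclp.rtrancl_into_rtrancl)
qed

lemma reachable_within_two_cut: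
  assumes Z: "Z \<subseteq> V" and cr: "crossing E Z = {e, f}" and "e \<noteq> V" "f \<noteq> V"
    and x: "x \<in> Z" "x \<in> e" and v: "v \<in> Z"
  shows "(adj (E - {e, f}))\<^sup>*\<^sup>* x v"
proof -
  define C where "C = {v. (adj (E - {e, f}))\<^sup>*\<^sup>* x v}"
  have C_closed: "\<And>h. h \<in> E - {e, f} \<Longrightarrow> h \<inter> C \<noteq> {} \<Longrightarrow> h \<subseteq> C"
    unfolding C_def by (rule reachable_closed) blast
  have Z_closed: "\<And>h. h \<in> E - {e, f} \<Longrightarrow> h \<inter> Z \<noteq> {} \<Longrightarrow> h \<subseteq> Z"
    using edge_inside_if_not_crossing cr by blast
  have "C \<subseteq> Z"
  proof
    fix v assume "v \<in> C"
    then show "v \<in> Z"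
      using rtranclp_adj_closed[of "E - {e, f}" Z x v] Z_closed x(1) by (simp add: C_def)
  qed
  have "crossing E C \<subseteq> {e, f}" using C_closed by (auto simp: crossing_def)
  have e_Z: "e \<in> crossing E Z" and f_Z: "f \<in> crossing E Z" using cr by simp_all
  have e_C: "e \<in> crossing E C"
    using e_Z x \<open>C \<subseteq> Z\<close> by (auto simp: crossing_def C_def)
  have f_C: "f \<in> crossing E C"
  proof (rule ccontr)
    assume "f \<notin> crossing E C"
    then have "crossing E C = {e}" using \<open>crossing E C \<subseteq> {e, f}\<close> e_C by blast
    then have "e = V" using crossing_singleton \<open>C \<subseteq> Z\<close> Z by blast
    with \<open>e \<noteq> V\<close> show False by contradiction
  qed
  have "crossing E (Z - C) = {}"
  proof (rule ccontr)
    assume "crossing E (Z - C) \<noteq> {}"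
    then obtain h where "h \<in> crossing E (Z - C)" by blast
    then obtain u w where h: "h = {u, w}" "u \<in> Z - C" "w \<notin> Z - C" "h \<in> E" by (rule crossingE)
    have "h \<notin> {e, f}"
      using crossing_Int_Diff[OF e_Z e_C] crossing_Int_Diff[OF f_Z f_C] \<open>C \<subseteq> Z\<close> h(1,2) by blast
    then have "h \<subseteq> Z" using Z_closed h by blast
    then have "h \<subseteq> C" using C_closed h \<open>h \<notin> {e, f}\<close> by blast
    with h(1,2) show False by blast
  qed
  moreover have "x \<in> V - (Z - C)" using x Z by (auto simp: C_def)
  ultimately have "Z - C = {}" using crossing_empty_eq[OF connected, of "Z - C"] Z by blast
  then show ?thesis using v by (auto simp: C_def)
qed

lemma is_component_of_two_cut:
  assumes Z: "Z \<subseteq> V" and cr: "crossing E Z = {e, f}" and "e \<noteq> V" "f \<noteq> V"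
  shows "is_component V (E - {e, f}) Z"
proof -
  have "e \<in> crossing E Z" using cr by simp
  then obtain x y where x: "e = {x, y}" "x \<in> Z" by (rule crossingE)
  have Z_closed: "\<And>h. h \<in> E - {e, f} \<Longrightarrow> h \<inter> Z \<noteq> {} \<Longrightarrow> h \<subseteq> Z"
    using edge_inside_if_not_crossing cr by blast
  have reach: "(adj {h \<in> E - {e, f}. h \<subseteq> Z})\<^sup>*\<^sup>* x v" if "v \<in> Z" for v
    using rtranclp_adj_closed[OF _ reachable_within_two_cut[OF assms x(2) _ that]] Z_closed x by simp
  have "connected_graph Z {h \<in> E - {e, f}. h \<subseteq> Z}"
    unfolding connected_graph_def
  proof (intro conjI ballI)
    show "Z \<noteq> {}" using x(2) by blast
    fix u v assume "u \<in> Z" "v \<in> Z"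
    show "(adj {h \<in> E - {e, f}. h \<subseteq> Z})\<^sup>*\<^sup>* u v"
      using rtranclp_trans[OF rtranclp_adj_sym[OF reach[OF \<open>u \<in> Z\<close>]] reach[OF \<open>v \<in> Z\<close>]] .
  qed
  then show ?thesis unfolding is_component_def using Z Z_closed by simp
qed

lemma two_edge_cut_sep_of_crossing:
  assumes Z: "Z \<subseteq> V" and cr: "crossing E Z = {e, f}" and "e \<noteq> f" "e \<noteq> V" "f \<noteq> V"
  shows "two_edge_cut_sep V E {e, f} Z (V - Z)"
proof -
  have cZ: "is_component V (E - {e, f}) Z"
    using is_component_of_two_cut[OF Z cr assms(4,5)] .
  have cZ': "is_component V (E - {e, f}) (V - Z)"
    using is_component_of_two_cut[of "V - Z"] crossing_Diff cr assms(4,5) by simp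
  have "e \<in> crossing E Z" "f \<in> crossing E Z" using cr by simp_all
  then have "{e, f} \<subseteq> E" by (simp add: crossing_def)
  have "Z \<noteq> {}" using cZ by (simp add: is_component_def connected_graph_def)
  then have "Z \<noteq> V - Z" by blast
  have "{W. is_component V (E - {e, f}) W} = {Z, V - Z}"
  proof (intro equalityI subsetI)
    fix W assume "W \<in> {W. is_component V (E - {e, f}) W}"
    then have cW: "is_component V (E - {e, f}) W" by simp
    then obtain w where "w \<in> W" "w \<in> V" by (auto simp: is_component_def connected_graph_def)
    then show "W \<in> {Z, V - Z}"
      using is_component_eq[OF cW cZ] is_component_eq[OF cW cZ'] by (cases "w \<in> Z") auto
  qed (use cZ cZ' in auto)
  moreover have "{h\<in>E. h \<inter> Z \<noteq> {} \<and> h \<inter> (V - Z) \<noteq> {}} = crossing E Z"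
    using edge_subset by (auto simp: crossing_def)
  ultimately show ?thesis
    using \<open>{e, f} \<subseteq> E\<close> \<open>e \<noteq> f\<close> \<open>Z \<noteq> V - Z\<close> cr unfolding two_edge_cut_sep_def by simp
qed

lemma crossing_Un_bipartite:
  assumes "X \<subseteq> B" "Y \<subseteq> A" "h \<in> crossing E (X \<union> Y)"
  obtains a b where "h = {a, b}" "a \<in> A" "b \<in> B" "b \<in> X \<and> a \<notin> Y \<or> a \<in> Y \<and> b \<notin> X"
proof -
  have "h \<in> E" using assms(3) by (simp add: crossing_def)
  then obtain a b where h: "h = {a, b}" "a \<in> A" "b \<in> B" by (rule edge_AB)
  then have "a \<notin> X" "b \<notin> Y" using assms(1,2) A_Int_B by blast+
  then have "b \<in> X \<and> a \<notin> Y \<or> a \<in> Y \<and> b \<notin> X" using assms(3) h(1) by (auto simp: crossing_def)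
  with h that show ?thesis by blast
qed

end

locale equivalent_pair = mc_bipartite +
  fixes M :: "'a set set" and a1 b1 a2 b2 :: 'a
  assumes pm: "perfect_matching V E M"
    and e_in_M: "{a1, b1} \<in> M" and f_in_M: "{a2, b2} \<in> M"
    and a1: "a1 \<in> A" and b1: "b1 \<in> B" and a2: "a2 \<in> A" and b2: "b2 \<in> B"
    and a1_neq_a2: "a1 \<noteq> a2"
    and equivalent: "equivalent_edges V E {a1, b1} {a2, b2}"
begin

lemma e_iff_f: "perfect_matching V E M' \<Longrightarrow> {a1, b1} \<in> M' \<longleftrightarrow> {a2, b2} \<in> M'"
  using equivalent by (simp add: equivalent_edges_def)

lemma ends_in_vertices: "a1 \<in> V" "b1 \<in> V" "a2 \<in> V" "b2 \<in> V"
  using a1 b1 a2 b2 A_Un_B by blast+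

lemma mate_ends: "mate M a1 = b1" "mate M a2 = b2" "mate M b2 = a2"
  using mate_eq[OF pm] e_in_M f_in_M by (metis insert_commute)+

lemma e_neq_f: "{a1, b1} \<noteq> {a2, b2}"
  using a1_neq_a2 a1 b2 A_Int_B by (auto simp: doubleton_eq_iff)

inductive_set reach :: "'a set" where
  start: "b1 \<in> reach"
| step: "b \<in> reach \<Longrightarrow> {b, a} \<in> E \<Longrightarrow> a \<noteq> a1 \<Longrightarrow> a \<noteq> a2 \<Longrightarrow> mate M a \<in> reach"

lemma reach_subset_B: "reach \<subseteq> B"
proof
  fix b assume "b \<in> reach"
  then show "b \<in> B" by induction (auto intro: b1 mate_A[OF pm] edge_B_A)
qed

lemma b2_notin_reach: "b2 \<notin> reach"
proof
  assume "b2 \<in> reach"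
  then show False
  proof cases
    case start
    then show False
      using mate_ends(1,3) mate_mate[OF pm ends_in_vertices(1)] a1_neq_a2 by simp
  next
    case (step b a)
    then have "a \<in> V" using edge_subset by blast
    then have "a = a2" using step(1) mate_mate[OF pm] mate_ends(3) by metis
    then show False using step(5) by contradiction
  qed
qed

definition near_perfect :: "'a set set \<Rightarrow> 'a \<Rightarrow> bool" where
  "near_perfect N b \<longleftrightarrow> exact_matching E (V - {a1, b}) N \<and> {a2, b2} \<in> N"

text \<open>Keeping the edges of M that avoid T makes the matching edge of a newly reached vertex
  available for the next swap.\<close>
definition near_perfect_for :: "'a set \<Rightarrow> bool" where
  "near_perfect_for T \<longleftrightarrow> (\<forall>b\<in>T. \<exists>N. near_perfect N b \<and> {g\<in>M. g \<inter> T = {}} \<subseteq> N)"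

lemma near_perfect_for_start: "near_perfect_for {b1}"
proof -
  have "exact_matching E (V - {a1, b1}) (M - {{a1, b1}})"
    using exact_matching_remove pm e_in_M perfect_matching_iff by fastforce
  moreover have "{a2, b2} \<in> M - {{a1, b1}}" using f_in_M e_neq_f by simp
  moreover have "{g\<in>M. g \<inter> {b1} = {}} \<subseteq> M - {{a1, b1}}" by blast
  ultimately show ?thesis unfolding near_perfect_for_def near_perfect_def by blast
qed

lemma near_perfect_swap:
  assumes N: "near_perfect N b" and "{a, c} \<in> N" "{b, a} \<in> E"
    and "b \<in> B" "c \<in> B" "b \<noteq> c" "a \<noteq> a1" "a \<noteq> a2"
  shows "near_perfect (insert {b, a} (N - {{a, c}})) c"
proof -
  have "a \<in> A" using edge_B_A assms(3,4) by blast
  then have "a \<in> V" "b \<in> V" "b \<noteq> a1" "a \<noteq> c"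
    using A_Un_B A_Int_B assms(4,5) a1 by blast+
  then have "(V - {a1, b}) - {a, c} \<union> {b, a} = V - {a1, c}" using assms(6,7) by auto
  moreover have "exact_matching E ((V - {a1, b}) - {a, c} \<union> {b, a}) (insert {b, a} (N - {{a, c}}))"
    using N assms(2,3) exact_matching_insert exact_matching_remove unfolding near_perfect_def by blast
  moreover have "{a2, b2} \<in> insert {b, a} (N - {{a, c}})"
    using N assms(8) \<open>a \<in> A\<close> b2 A_Int_B by (auto simp: near_perfect_def doubleton_eq_iff)
  ultimately show ?thesis by (simp add: near_perfect_def)
qed

lemma near_perfect_for_step:
  assumes T: "T \<subseteq> B" "near_perfect_for T" and "b \<in> T" and ba: "{b, a} \<in> E" "a \<noteq> a1" "a \<noteq> a2"
  shows "near_perfect_for (insert (mate M a) T)"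
proof (cases "mate M a \<in> T")
  case True
  then show ?thesis using T(2) by (simp add: insert_absorb)
next
  case False
  define c where "c = mate M a"
  have "b \<in> B" "a \<in> A" using T(1) \<open>b \<in> T\<close> edge_B_A ba(1) by blast+
  then have "c \<in> B" "{a, c} \<in> M"
    using A_Un_B mate_A[OF pm] mate_in_matching[OF pm] by (auto simp: c_def)
  have "c \<notin> T" using False by (simp add: c_def)
  obtain N where N: "near_perfect N b" and keep: "{g\<in>M. g \<inter> T = {}} \<subseteq> N"
    using T(2) \<open>b \<in> T\<close> unfolding near_perfect_for_def by blast
  have "{a, c} \<inter> T = {}" using \<open>a \<in> A\<close> T(1) A_Int_B \<open>c \<notin> T\<close> by blast
  then have "{a, c} \<in> N" using keep \<open>{a, c} \<in> M\<close> by blast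
  moreover have "b \<noteq> c" using \<open>b \<in> T\<close> \<open>c \<notin> T\<close> by blast
  ultimately have "near_perfect (insert {b, a} (N - {{a, c}})) c"
    using near_perfect_swap[OF N] ba \<open>b \<in> B\<close> \<open>c \<in> B\<close> by blast
  moreover have "{g\<in>M. g \<inter> insert c T = {}} \<subseteq> insert {b, a} (N - {{a, c}})" using keep by auto
  moreover have "\<exists>N. near_perfect N b' \<and> {g\<in>M. g \<inter> insert c T = {}} \<subseteq> N" if "b' \<in> T" for b'
    using T(2) that unfolding near_perfect_for_def by blast
  ultimately show ?thesis unfolding near_perfect_for_def c_def by blast
qed

lemma near_perfect_of_reach:
  assumes "b \<in> reach"
  obtains N where "near_perfect N b"
proof -
  have "\<exists>T \<subseteq> B. b \<in> T \<and> near_perfect_for T"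
    using assms
  proof induction
    case start
    then show ?case using near_perfect_for_start b1 by blast
  next
    case (step b a)
    then obtain T where "T \<subseteq> B" "b \<in> T" "near_perfect_for T" by blast
    then have "insert (mate M a) T \<subseteq> B" "near_perfect_for (insert (mate M a) T)"
      using near_perfect_for_step step(2-4) mate_A[OF pm] edge_B_A by blast+
    then show ?case by blast
  qed
  then show ?thesis using that unfolding near_perfect_for_def by blast
qed

lemma reach_edge_a1:
  assumes "b \<in> reach" "{b, a1} \<in> E"
  shows "b = b1"
proof -
  obtain N where N: "exact_matching E (V - {a1, b}) N" "{a2, b2} \<in> N"
    using near_perfect_of_reach[OF assms(1)] unfolding near_perfect_def by blast
  have "b \<in> V" using assms(1) reach_subset_B A_Un_B by blast
  then have "V - {a1, b} \<union> {b, a1} = V" using ends_in_vertices(1) by blast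
  then have "exact_matching E V (insert {b, a1} N)"
    using exact_matching_insert[OF N(1) assms(2)] by fastforce
  then have "{a1, b1} \<in> insert {b, a1} N"
    using e_iff_f N(2) perfect_matching_iff by blast
  moreover have "{a1, b1} \<notin> N" using N(1) by (auto simp: exact_matching_def)
  ultimately have "{a1, b1} = {b, a1}" by blast
  then show ?thesis using a1 b1 A_Int_B by (auto simp: doubleton_eq_iff)
qed

lemma nbrs_reach_subset_A: "nbrs E reach \<subseteq> A"
  using reach_subset_B edge_B_A by (auto simp: nbrs_def)

lemma finite_nbrs_reach: "finite (nbrs E reach)"
  using nbrs_reach_subset_A finite_A by (rule finite_subset)

lemma a1_in_nbrs: "a1 \<in> nbrs E reach"
  using reach.start e_in_M pm perfect_matching_subset by (fastforce simp: nbrs_def insert_commute)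

lemma mate_image_reach: "mate M ` reach = nbrs E reach - {a2}"
proof
  have "reach \<subseteq> V" using reach_subset_B A_Un_B by blast
  moreover have "mate M b \<noteq> a2" if "b \<in> reach" for b
  proof
    assume "mate M b = a2"
    then have "b = b2" using mate_mate[OF pm, of b] mate_ends(2) that \<open>reach \<subseteq> V\<close> by auto
    then show False using that b2_notin_reach by simp
  qed
  ultimately show "mate M ` reach \<subseteq> nbrs E reach - {a2}"
    using mate_image_subset_nbrs[OF pm] by blast
next
  show "nbrs E reach - {a2} \<subseteq> mate M ` reach"
  proof
    fix a assume a: "a \<in> nbrs E reach - {a2}"
    then have "a \<in> V" using nbrs_reach_subset_A A_Un_B by blast
    show "a \<in> mate M ` reach"
    proof (cases "a = a1")
      case True
      then show ?thesis using mate_mate[OF pm ends_in_vertices(1)] mate_ends(1) reach.start by force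
    next
      case False
      then have "mate M a \<in> reach" using a reach.step by (auto simp: nbrs_def)
      then show ?thesis using mate_mate[OF pm \<open>a \<in> V\<close>] by force
    qed
  qed
qed

lemma card_nbrs_reach_Diff_a2: "card (nbrs E reach - {a2}) = card reach"
proof -
  have "inj_on (mate M) reach" using inj_on_mate[OF pm] reach_subset_B A_Un_B by (auto intro: inj_on_subset)
  then show ?thesis using mate_image_reach card_image by metis
qed

lemma a2_in_nbrs: "a2 \<in> nbrs E reach"
proof (rule ccontr)
  assume "a2 \<notin> nbrs E reach"
  then have card_eq: "card (nbrs E reach) = card reach" using card_nbrs_reach_Diff_a2 by simp
  define W where "W = reach \<union> nbrs E reach"
  have "reach \<subseteq> V" using reach_subset_B A_Un_B by blast
  have "crossing E W = {}"
  proof (rule ccontr)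
    assume "crossing E W \<noteq> {}"
    then obtain h where "h \<in> crossing E W" by blast
    then obtain a b where h: "h = {a, b}" "a \<in> A" "b \<in> B"
      and "b \<in> reach \<and> a \<notin> nbrs E reach \<or> a \<in> nbrs E reach \<and> b \<notin> reach"
      using crossing_Un_bipartite[OF reach_subset_B nbrs_reach_subset_A] unfolding W_def by metis
    moreover have "h \<in> E" using \<open>h \<in> crossing E W\<close> by (simp add: crossing_def)
    ultimately have "a \<in> nbrs E reach" "b \<notin> reach" by (auto simp: nbrs_def insert_commute)
    obtain M' where M': "perfect_matching V E M'" "{a, b} \<in> M'"
      using \<open>h \<in> E\<close> h(1) by (blast elim: perfect_matching_through)
    have "b \<in> reach"
      using matched_into_tight[OF M'(1) \<open>reach \<subseteq> V\<close> mate_image_subset_nbrs[OF M'(1) \<open>reach \<subseteq> V\<close>]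
          finite_nbrs_reach _ M'(2) \<open>a \<in> nbrs E reach\<close>] card_eq by simp
    with \<open>b \<notin> reach\<close> show False by contradiction
  qed
  moreover have "W \<subseteq> V" "W \<noteq> {}"
    using \<open>reach \<subseteq> V\<close> nbrs_reach_subset_A A_Un_B reach.start by (auto simp: W_def)
  ultimately have "a2 \<in> W" using crossing_empty_eq[OF connected] ends_in_vertices(3) by blast
  then show False using \<open>a2 \<notin> nbrs E reach\<close> reach_subset_B a2 A_Int_B by (auto simp: W_def)
qed

lemma card_nbrs_reach_Diff: "x \<in> {a1, a2} \<Longrightarrow> card (nbrs E reach - {x}) = card reach"
  using card_nbrs_reach_Diff_a2 a1_in_nbrs a2_in_nbrs finite_nbrs_reach
  by (auto simp: card_Diff_singleton)

lemma edge_leaving_nbrs: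
  assumes ab: "{a, b} \<in> E" "a \<in> nbrs E reach" "a \<noteq> a1" "b \<notin> reach"
  shows "a = a2 \<and> b = b2"
proof -
  obtain M' where M': "perfect_matching V E M'" "{a, b} \<in> M'" using ab(1) by (rule perfect_matching_through)
  have "reach \<subseteq> V" using reach_subset_B A_Un_B by blast
  have matched_into_reach: "a = x"
    if "x \<in> {a1, a2}" "\<And>b'. b' \<in> reach \<Longrightarrow> mate M' b' \<noteq> x" for x
  proof (rule ccontr)
    assume "a \<noteq> x"
    have "mate M' ` reach \<subseteq> nbrs E reach - {x}"
      using mate_image_subset_nbrs[OF M'(1) \<open>reach \<subseteq> V\<close>] that(2) by blast
    then have "b \<in> reach"
      using matched_into_tight[OF M'(1) \<open>reach \<subseteq> V\<close> _ _ _ M'(2)] finite_nbrs_reach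
        card_nbrs_reach_Diff[OF that(1)] ab(2) \<open>a \<noteq> x\<close> by simp
    with ab(4) show False by contradiction
  qed
  show ?thesis
  proof (cases "{a1, b1} \<in> M'")
    case True
    then have "mate M' a2 = b2" using e_iff_f[OF M'(1)] mate_eq[OF M'(1)] by blast
    then have "mate M' b' \<noteq> a2" if "b' \<in> reach" for b'
      using that b2_notin_reach mate_mate[OF M'(1)] \<open>reach \<subseteq> V\<close> by force
    then have "a = a2" using matched_into_reach by blast
    then show ?thesis using \<open>mate M' a2 = b2\<close> mate_eq[OF M'(1) M'(2)] by simp
  next
    case False
    have "mate M' b' \<noteq> a1" if "b' \<in> reach" for b'
    proof
      assume "mate M' b' = a1"
      then have "{b', a1} \<in> M'" using mate_in_matching[OF M'(1)] that \<open>reach \<subseteq> V\<close> by force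
      then have "b' = b1" using reach_edge_a1 that M'(1) perfect_matching_subset by blast
      with \<open>{b', a1} \<in> M'\<close> False show False by (simp add: insert_commute)
    qed
    then show ?thesis using matched_into_reach ab(3) by blast
  qed
qed

definition side :: "'a set" where
  "side = reach \<union> (nbrs E reach - {a1})"

lemma side_subset: "side \<subseteq> V"
  using reach_subset_B nbrs_reach_subset_A A_Un_B by (auto simp: side_def)

lemma crossing_side: "crossing E side = {{a1, b1}, {a2, b2}}"
proof (intro equalityI subsetI)
  fix h assume "h \<in> crossing E side"
  then obtain a b where h: "h = {a, b}" "a \<in> A" "b \<in> B"
    and cases: "b \<in> reach \<and> a \<notin> nbrs E reach - {a1} \<or> a \<in> nbrs E reach - {a1} \<and> b \<notin> reach"
    using crossing_Un_bipartite[of reach "nbrs E reach - {a1}"] reach_subset_B nbrs_reach_subset_A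
    unfolding side_def by blast
  have "h \<in> E" using \<open>h \<in> crossing E side\<close> by (simp add: crossing_def)
  from cases show "h \<in> {{a1, b1}, {a2, b2}}"
  proof
    assume "b \<in> reach \<and> a \<notin> nbrs E reach - {a1}"
    moreover have "{b, a} \<in> E" using \<open>h \<in> E\<close> h(1) by (simp add: insert_commute)
    ultimately have "a = a1" "{b, a1} \<in> E" by (auto simp: nbrs_def)
    then show ?thesis using reach_edge_a1 \<open>b \<in> reach \<and> _\<close> h(1) by blast
  next
    assume "a \<in> nbrs E reach - {a1} \<and> b \<notin> reach"
    then show ?thesis using edge_leaving_nbrs \<open>h \<in> E\<close> h(1) by blast
  qed
next
  fix h assume "h \<in> {{a1, b1}, {a2, b2}}"
  moreover have "b1 \<in> side" "a1 \<notin> side" "a2 \<in> side" "b2 \<notin> side"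
    using reach.start a1_neq_a2 a2_in_nbrs b2_notin_reach reach_subset_B nbrs_reach_subset_A
      a1 b2 A_Int_B
    by (auto simp: side_def)
  moreover have "{a1, b1} \<in> E" "{a2, b2} \<in> E" using e_in_M f_in_M perfect_matching_subset[OF pm] by blast+
  ultimately show "h \<in> crossing E side" by (auto simp: crossing_def)
qed

lemma balanced_side: "balanced A B side"
proof -
  have "side \<inter> A = nbrs E reach - {a1}" "side \<inter> B = reach"
    using reach_subset_B nbrs_reach_subset_A A_Int_B by (auto simp: side_def)
  then show ?thesis using card_nbrs_reach_Diff by (simp add: balanced_def)
qed

lemma balanced_two_edge_cut: "\<exists>S X Y. two_edge_cut_sep V E S X Y \<and> balanced A B X \<and> balanced A B Y"
proof -
  have "{a1, b1} \<noteq> V" "{a2, b2} \<noteq> V"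
    using ends_in_vertices a1_neq_a2 a1 a2 b1 b2 A_Int_B by auto
  then have "two_edge_cut_sep V E {{a1, b1}, {a2, b2}} side (V - side)"
    using two_edge_cut_sep_of_crossing[OF side_subset crossing_side e_neq_f] by blast
  then show ?thesis using balanced_side balanced_Diff[OF side_subset] by blast
qed

end

context mc_bipartite
begin

lemma balanced_two_edge_cut_of_equivalent_class:
  assumes "equivalent_class V E K"
  shows "\<exists>S X Y. two_edge_cut_sep V E S X Y \<and> balanced A B X \<and> balanced A B Y"
proof -
  have "card K \<ge> 2" "K \<subseteq> E" using assms by (simp_all add: equivalent_class_def)
  obtain S where "S \<subseteq> K" "card S = 2" using obtain_subset_with_card_n[OF \<open>card K \<ge> 2\<close>] .
  then obtain e f where ef: "e \<in> K" "f \<in> K" "e \<noteq> f" unfolding card_2_iff by blast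
  have equiv: "equivalent_edges V E e f" using assms ef by (simp add: equivalent_class_def)
  have "e \<in> E" "f \<in> E" using ef \<open>K \<subseteq> E\<close> by blast+
  obtain M where pm: "perfect_matching V E M" "e \<in> M" using \<open>e \<in> E\<close> by (rule perfect_matching_through)
  then have "f \<in> M" using equiv by (simp add: equivalent_edges_def)
  obtain a1 b1 where e: "e = {a1, b1}" "a1 \<in> A" "b1 \<in> B" using \<open>e \<in> E\<close> by (rule edge_AB)
  obtain a2 b2 where f: "f = {a2, b2}" "a2 \<in> A" "b2 \<in> B" using \<open>f \<in> E\<close> by (rule edge_AB)
  have "a1 \<noteq> a2" using perfect_matching_disjoint[OF pm \<open>f \<in> M\<close>] e f ef(3) by blast
  interpret equivalent_pair V E A B M a1 b1 a2 b2
    using pm \<open>f \<in> M\<close> e f \<open>a1 \<noteq> a2\<close> equiv by unfold_locales simp_all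
  show ?thesis by (rule balanced_two_edge_cut)
qed

end

theorem theorem5:
  fixes V A B :: "'a set" and E :: "'a set set"
  assumes "simple_graph V E"
    and "bipartite_with V E A B"
    and "matching_covered V E"
  shows "(\<exists>K. equivalent_class V E K) \<longleftrightarrow>
         (\<exists>S X Y. two_edge_cut_sep V E S X Y \<and> balanced A B X \<and> balanced A B Y)"
proof -
  interpret mc_bipartite V E A B
    using assms by unfold_locales
  show ?thesis
    using balanced_two_edge_cut_of_equivalent_class equivalent_class_of_balanced_cut by blast
qed

end
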